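(* For integers $0\le l\le m$ let $$A_{l,m}:=l!\,m!\,2^{m+l}d_{l,m}=\frac{l!\,m!}{2^{m-l}}\sum_{k=l}^{m}2^{k}\binom{2m-2k}{m-k}\binom{m+k}{k}\binom{k}{l}.$$ Then $A_{l,m}$ is a positive integer and $$\nu_{2}(A_{l,m})=\nu_{2}\big((m+1-l)_{2l}\big)+l,$$ where $(x)_k=x(x+1)\cdots(x+k-1)$ for $k\ge1$ and $(x)_0=1$. In particular $\nu_2(A_{1,m})=\nu_2(m(m+1))+1$.
   Context: $d_{l,m}=2^{-2m}\sum_{k=l}^{m}2^{k}\binom{2m-2k}{m-k}\binom{m+k}{m}\binom{k}{l}$. For a nonzero rational $x$, $\nu_2(x)$ denotes its $2$-adic valuation (the exponent of $2$ in $x$). *)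

theory Defs
  imports "HOL-Computational_Algebra.Computational_Algebra"
begin

definition d_coef :: "nat \<Rightarrow> nat \<Rightarrow> rat" where
  "d_coef l m = (1 / 2 ^ (2*m)) *
     (\<Sum>k=l..m. 2 ^ k * of_nat ((2*m - 2*k) choose (m - k)) * of_nat ((m + k) choose m)
                  * of_nat (k choose l))"

definition A_coef :: "nat \<Rightarrow> nat \<Rightarrow> rat" where
  "A_coef l m = fact l * fact m * 2 ^ (m + l) * d_coef l m"

end

theory Submission
  imports Defs
begin

(*
  Put j = m - k.  Using (2j choose j) * j! = 2^j * (2j-1)!!,
  l! m! (m+k choose m) (k choose l) = (m+l)! (m+k choose k-l) and
  (m+l)! = j! * (j+1)_(k-l) * (m+1-l)_(2l), every summand of A_{l,m} becomes

      2^l * (m+1-l)_(2l) * T_k,   T_k = (m-k+1)_(k-l) * (2(m-k)-1)!! * (m+k choose k-l),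

  so A_{l,m} = 2^l * (m+1-l)_(2l) * B with B = sum_{k=l..m} T_k, a natural number.
  The term T_l = (2(m-l)-1)!! is odd, while every T_k with k > l is even: for k - l >= 2
  the rising factorial (m-k+1)_(k-l) contains two consecutive factors, and for k = l+1 the
  factors m-l and m+l+1 have opposite parity.  Hence B is odd and
  nu_2(A_{l,m}) = l + nu_2((m+1-l)_(2l)).
*)

definition odd_double_fact :: "nat \<Rightarrow> nat" where
  "odd_double_fact j = (\<Prod>i<j. 2 * i + 1)"

lemma odd_double_fact_Suc: "odd_double_fact (Suc j) = odd_double_fact j * (2 * j + 1)"
  by (simp add: odd_double_fact_def)

lemma odd_odd_double_fact: "odd (odd_double_fact j)"
  by (induction j) (simp_all add: odd_double_fact_Suc odd_double_fact_def[of 0])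

text \<open>Splitting (2j)! into its even and odd factors: (2j)! = 2^j * j! * (2j-1)!!.\<close>
lemma fact_double_nat: "fact (2 * j) = (2::nat) ^ j * fact j * odd_double_fact j"
proof (induction j)
  case 0
  then show ?case by (simp add: odd_double_fact_def)
next
  case (Suc j)
  have "fact (2 * Suc j) = (2 * j + 2) * ((2 * j + 1) * (fact (2 * j) :: nat))"
    by (simp add: algebra_simps)
  also have "\<dots> = 2 ^ Suc j * fact (Suc j) * odd_double_fact (Suc j)"
    using Suc by (simp add: odd_double_fact_Suc algebra_simps)
  finally show ?case .
qed

lemma central_binomial_fact: "(2 * j choose j) * fact j = (2::nat) ^ j * odd_double_fact j"
proof -
  have "fact j * fact (2 * j - j) * (2 * j choose j) = (fact (2 * j) :: nat)"
    by (rule binomial_fact_lemma) simp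
  then have "fact j * ((2 * j choose j) * fact j) = fact j * (2 ^ j * odd_double_fact j)"
    using fact_double_nat[of j] by (simp add: algebra_simps)
  then show ?thesis by simp
qed

lemma fact_add_pochhammer: "fact (n + k) = fact n * (pochhammer (n + 1) k :: nat)"
  using pochhammer_product'[of "1::nat" n k] by (simp only: pochhammer_fact) (simp add: add.commute)

text \<open>Trinomial revision, cleared of denominators:
  l! m! (m+k choose m)(k choose l) = (m+l)! (m+k choose k-l); both sides equal
  (m+k)! / (k-l)!.\<close>
lemma trinomial_revision:
  assumes "l \<le> k"
  shows "fact l * fact m * (m + k choose m) * (k choose l)
         = (fact (m + l) :: nat) * (m + k choose (k - l))"
proof -
  have mk: "fact m * fact k * (m + k choose m) = (fact (m + k) :: nat)"
    using binomial_fact_lemma[of m "m + k"] by simp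
  have kl: "fact l * fact (k - l) * (k choose l) = (fact k :: nat)"
    using binomial_fact_lemma[OF assms] .
  have mkl: "fact (k - l) * fact (m + l) * (m + k choose (k - l)) = (fact (m + k) :: nat)"
    using binomial_fact_lemma[of "k - l" "m + k"] assms by simp
  have "(fact l * fact m * (m + k choose m) * (k choose l)) * (fact k * fact (k - l))
      = (fact m * fact k * (m + k choose m)) * (fact l * fact (k - l) * (k choose l))"
    by (simp add: algebra_simps)
  also have "\<dots> = fact (m + k) * fact k"
    using mk kl by simp
  also have "\<dots> = (fact (m + l) * (m + k choose (k - l))) * (fact k * fact (k - l))"
    using mkl by (simp add: algebra_simps)
  finally show ?thesis by simp
qed

text \<open>The k-th summand of A_{l,m}, divided by 2^(2m) * 2^l * (m+1-l)_(2l).\<close>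
definition reduced_term :: "nat \<Rightarrow> nat \<Rightarrow> nat \<Rightarrow> nat" where
  "reduced_term l m k =
     pochhammer (m - k + 1) (k - l) * odd_double_fact (m - k) * (m + k choose (k - l))"

lemma summand_factorisation:
  assumes "l \<le> k" "k \<le> m"
  shows "fact l * fact m * 2 ^ (m + l) *
           (2 ^ k * (2 * m - 2 * k choose (m - k)) * (m + k choose m) * (k choose l))
       = (2::nat) ^ (2 * m) * (2 ^ l * pochhammer (m + 1 - l) (2 * l) * reduced_term l m k)"
proof -
  define j where "j = m - k"
  define P where "P = (pochhammer (m + 1 - l) (2 * l) :: nat)"
  define R where "R = (pochhammer (j + 1) (k - l) :: nat)"
  have j: "2 * m - 2 * k = 2 * j" "m - k = j" "m = k + j"
    using assms unfolding j_def by auto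
  have fact_ml: "fact (m + l) = fact j * R * P"
  proof -
    have "fact (m - l) = fact j * R"
      using fact_add_pochhammer[of j "k - l"] assms unfolding R_def j_def by simp
    moreover have "fact (m + l) = fact (m - l) * P"
      using fact_add_pochhammer[of "m - l" "2 * l"] assms unfolding P_def by (simp add: Suc_diff_le add.commute)
    ultimately show ?thesis by simp
  qed
  have pow: "(2::nat) ^ (m + l + k) * 2 ^ j = 2 ^ (2 * m) * 2 ^ l"
    unfolding power_add[symmetric] using j by (simp add: algebra_simps)
  have "(fact l * fact m * 2 ^ (m + l) *
         (2 ^ k * (2 * m - 2 * k choose (m - k)) * (m + k choose m) * (k choose l))) * fact j
      = 2 ^ (m + l + k) * (fact l * fact m * (m + k choose m) * (k choose l))
          * ((2 * j choose j) * fact j)"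
    unfolding j(1,2) by (simp add: algebra_simps power_add)
  also have "\<dots> = 2 ^ (m + l + k) * (fact (m + l) * (m + k choose (k - l)))
                    * (2 ^ j * odd_double_fact j)"
    using trinomial_revision[OF assms(1), of m] central_binomial_fact[of j] by simp
  also have "\<dots> = (2 ^ (m + l + k) * 2 ^ j) * fact (m + l) * (m + k choose (k - l))
                    * odd_double_fact j"
    by (simp add: algebra_simps)
  also have "\<dots> = (2 ^ (2 * m) * (2 ^ l * P * reduced_term l m k)) * fact j"
    unfolding pow fact_ml reduced_term_def j(2) R_def by (simp add: algebra_simps)
  finally show ?thesis unfolding P_def by simp
qed

text \<open>A rising factorial of length at least two contains two consecutive factors.\<close>
lemma even_pochhammer:
  assumes "2 \<le> n"
  shows "even (pochhammer (x::nat) n)"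
proof -
  have "pochhammer x n = pochhammer x 2 * pochhammer (x + 2) (n - 2)"
    using pochhammer_product[OF assms, of x] by simp
  moreover have "pochhammer x 2 = x * (x + 1)"
    by (simp add: numeral_2_eq_2 pochhammer_Suc)
  ultimately show ?thesis by simp
qed

lemma even_reduced_term:
  assumes "l < k" "k \<le> m"
  shows "even (reduced_term l m k)"
proof (cases "k = Suc l")
  case True
  (* the reduced term is (m-l) * (2(m-k)-1)!! * (m+l+1), and (m-l) + (m+l+1) is odd *)
  then have "m - k + 1 = m - l" "k - l = 1"
    using assms by auto
  then have "reduced_term l m k = (m - l) * odd_double_fact (m - k) * (m + k)"
    by (simp add: reduced_term_def)
  moreover have "even ((m - l) * (m + k))"
    using True assms by auto
  ultimately show ?thesis by auto
next
  case False
  then have "even (pochhammer (m - k + 1) (k - l))"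
    using assms by (intro even_pochhammer) simp
  then show ?thesis by (simp add: reduced_term_def)
qed

text \<open>Only the first reduced term is odd, so the reduced sum is odd.\<close>
lemma odd_reduced_sum:
  assumes "l \<le> m"
  shows "odd (\<Sum>k=l..m. reduced_term l m k)"
proof -
  have "(\<Sum>k=l..m. reduced_term l m k) = reduced_term l m l + (\<Sum>k=Suc l..m. reduced_term l m k)"
    using assms by (rule sum.atLeast_Suc_atMost)
  moreover have "odd (reduced_term l m l)"
    by (simp add: reduced_term_def odd_odd_double_fact)
  moreover have "even (\<Sum>k=Suc l..m. reduced_term l m k)"
    by (rule dvd_sum) (auto intro: even_reduced_term)
  ultimately show ?thesis by simp
qed

lemma A_coef_closed_form:
  assumes "l \<le> m"
  shows "A_coef l m
       = of_nat (2 ^ l * pochhammer (m + 1 - l) (2 * l) * (\<Sum>k=l..m. reduced_term l m k))"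
proof -
  let ?t = "\<lambda>k. 2 ^ k * (2 * m - 2 * k choose (m - k)) * (m + k choose m) * (k choose l)"
  have "(2::rat) ^ (2 * m) * A_coef l m = of_nat (\<Sum>k=l..m. fact l * fact m * 2 ^ (m + l) * ?t k)"
    unfolding A_coef_def d_coef_def by (simp add: sum_distrib_left algebra_simps)
  also have "(\<Sum>k=l..m. fact l * fact m * 2 ^ (m + l) * ?t k)
      = 2 ^ (2 * m) * (2 ^ l * pochhammer (m + 1 - l) (2 * l) * (\<Sum>k=l..m. reduced_term l m k))"
    by (simp add: sum_distrib_left summand_factorisation)
  finally show ?thesis by simp
qed

lemma multiplicity_prime_power_times:
  fixes p :: "'a :: factorial_semiring"
  assumes "prime p" "x \<noteq> 0" "\<not> p dvd b"
  shows "multiplicity p (p ^ a * x * b) = a + multiplicity p x"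
proof -
  have "b \<noteq> 0" using assms(3) by auto
  then show ?thesis
    using assms by (simp add: prime_elem_multiplicity_mult_distrib not_dvd_imp_multiplicity_0)
qed

theorem A_coef_valuation:
  assumes "l \<le> m"
  shows "\<exists>n :: nat. n > 0 \<and> A_coef l m = of_nat n \<and>
           multiplicity 2 n = multiplicity (2::nat) (pochhammer (m + 1 - l) (2 * l) :: nat) + l"
proof -
  define P where "P = (pochhammer (m + 1 - l) (2 * l) :: nat)"
  define B where "B = (\<Sum>k=l..m. reduced_term l m k)"
  have "odd B" unfolding B_def using assms by (rule odd_reduced_sum)
  moreover have "P \<noteq> 0"
    unfolding P_def using assms pochhammer_pos[of "m + 1 - l" "2 * l"] by simp
  ultimately have "2 ^ l * P * B > 0" and "multiplicity 2 (2 ^ l * P * B) = l + multiplicity 2 P"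
    by (auto intro: multiplicity_prime_power_times simp: odd_pos)
  then show ?thesis
    using A_coef_closed_form[OF assms] unfolding P_def[symmetric] B_def[symmetric]
    by (intro exI[of _ "2 ^ l * P * B"]) simp
qed

theorem mainTheorem9:
  "(\<forall>l m :: nat. l \<le> m \<longrightarrow>
      (\<exists>n :: nat. n > 0 \<and> A_coef l m = of_nat n \<and>
         multiplicity (2::nat) n = multiplicity (2::nat) (pochhammer (m + 1 - l) (2 * l) :: nat) + l))
   \<and> (\<forall>m :: nat. 1 \<le> m \<longrightarrow>
      (\<exists>n :: nat. n > 0 \<and> A_coef 1 m = of_nat n \<and>
         multiplicity (2::nat) n = multiplicity (2::nat) (m * (m + 1)) + 1))"
proof (intro conjI allI impI)
  fix l m :: nat
  assume "l \<le> m"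
  then show "\<exists>n :: nat. n > 0 \<and> A_coef l m = of_nat n \<and>
      multiplicity (2::nat) n = multiplicity (2::nat) (pochhammer (m + 1 - l) (2 * l) :: nat) + l"
    by (rule A_coef_valuation)
next
  fix m :: nat
  assume "1 \<le> m"
  moreover have "pochhammer (m + 1 - 1) (2 * 1) = m * (m + 1)"
    by (simp add: numeral_2_eq_2 pochhammer_Suc)
  ultimately show "\<exists>n :: nat. n > 0 \<and> A_coef 1 m = of_nat n \<and>
      multiplicity (2::nat) n = multiplicity (2::nat) (m * (m + 1)) + 1"
    using A_coef_valuation[of 1 m] by simp
qed

end
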